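(* Let $N_e\ge2$, $L\ge1$ be integers, $\sigma_r>0$, $c_4\in\mathbb{C}\setminus\{0\}$, $d>0$. For $\phi\in(-\pi/2,\pi/2)$ let $$\mathbf{C}(\phi)=|c_4|^2L\,\mathbf{I}_L\otimes\big(d\,\mathbf{c}(\phi)\mathbf{c}(\phi)^H\big)+\sigma_r^2\mathbf{I}_{N_eL},$$ $F_{\phi\phi}=\mathrm{tr}\!\big(\mathbf{C}^{-1}\frac{\partial\mathbf{C}}{\partial\phi}\mathbf{C}^{-1}\frac{\partial\mathbf{C}}{\partial\phi}\big)$ and $\mathrm{CRB}(\phi)=1/F_{\phi\phi}$. Then $$\mathrm{CRB}(\phi)=\frac{6\sigma_r^2(\sigma_r^2+|c_4|^2LdN_e)}{|c_4|^4L^3d^2\pi^2\cos^2(\phi)N_e^2(N_e^2-1)}.$$ Moreover, if $\phi\sim\mathcal{U}(-\pi/2,\pi/2)$ then for $\epsilon>0$, with $u(\epsilon)=\sqrt6\,\sigma_r\big(\epsilon|c_4|^4L^3d^2\pi^2N_e^2(N_e^2-1)\big)^{-1/2}(\sigma_r^2+|c_4|^2LdN_e)^{1/2}$, we have $P(\mathrm{CRB}(\phi)>\epsilon)=\frac2\pi\sin^{-1}(u(\epsilon))$ if $u(\epsilon)<1$, and $=1$ otherwise.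
   Context: $j=\sqrt{-1}$. $\mathbf{c}(\phi)\in\mathbb{C}^{N_e}$ has $i$-th entry $e^{-j\pi\sin(\phi)\frac{N_e-(2i-1)}{2}}$. This models a weak sensing eavesdropper (not knowing the transmitted signal) under the SSJB scheme: its vectorized observation is zero-mean complex Gaussian with covariance $\mathbf{C}(\phi)$, where in the paper $d=P\tau|\alpha|^2N$ ($P>0$ transmit power, $\tau\in(0,1)$ data power fraction, $\alpha$ the coefficient of the data beam along the normalized target steering vector, $N$ the number of BS transmit antennas); $\mathrm{CRB}(\phi)$ is the inverse Fisher information for $\phi$. *)

theory Defs
  imports "HOL-Probability.Probability" "Jordan_Normal_Form.Gauss_Jordan_Elimination"
begin

definition steer :: "nat \<Rightarrow> real \<Rightarrow> complex vec" where
  "steer Ne phi = vec Ne (\<lambda>i. exp (- \<i> * complex_of_real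
      (pi * sin phi * (real Ne - (2 * real (i + 1) - 1)) / 2)))"

definition outer_H :: "complex vec \<Rightarrow> complex mat" where
  "outer_H x = mat (dim_vec x) (dim_vec x) (\<lambda>(i,j). x $ i * cnj (x $ j))"

definition kron_id :: "nat \<Rightarrow> complex mat \<Rightarrow> complex mat" where
  "kron_id L X = (let n = dim_row X in
     mat (L * n) (L * n) (\<lambda>(k,l). if k div n = l div n then X $$ (k mod n, l mod n) else 0))"

definition covC :: "nat \<Rightarrow> nat \<Rightarrow> real \<Rightarrow> complex \<Rightarrow> real \<Rightarrow> real \<Rightarrow> complex mat" where
  "covC Ne L sr c4 d phi =
     complex_of_real ((cmod c4)\<^sup>2 * real L) \<cdot>\<^sub>m
        kron_id L (complex_of_real d \<cdot>\<^sub>m outer_H (steer Ne phi))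
     + complex_of_real (sr\<^sup>2) \<cdot>\<^sub>m 1\<^sub>m (Ne * L)"

definition mtrace :: "complex mat \<Rightarrow> complex" where
  "mtrace A = (\<Sum>i<dim_row A. A $$ (i,i))"

definition dcovC :: "nat \<Rightarrow> nat \<Rightarrow> real \<Rightarrow> complex \<Rightarrow> real \<Rightarrow> real \<Rightarrow> complex mat" where
  "dcovC Ne L sr c4 d phi =
     mat (Ne * L) (Ne * L)
       (\<lambda>(i,j). vector_derivative (\<lambda>t. covC Ne L sr c4 d t $$ (i,j)) (at phi))"

definition fisher :: "nat \<Rightarrow> nat \<Rightarrow> real \<Rightarrow> complex \<Rightarrow> real \<Rightarrow> real \<Rightarrow> complex" where
  "fisher Ne L sr c4 d phi =
     (let Ci = the (mat_inverse (covC Ne L sr c4 d phi));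
          D = dcovC Ne L sr c4 d phi
      in mtrace (Ci * D * Ci * D))"

definition CRB :: "nat \<Rightarrow> nat \<Rightarrow> real \<Rightarrow> complex \<Rightarrow> real \<Rightarrow> real \<Rightarrow> complex" where
  "CRB Ne L sr c4 d phi = 1 / fisher Ne L sr c4 d phi"

end

theory Submission
  imports Defs "Jordan_Normal_Form.Determinant"
begin

text \<open>Each diagonal block of \<open>C(\<phi>)\<close> is \<open>k c c\<^sup>H + s I\<close> with \<open>k = |c\<^sub>4|\<^sup>2 L d\<close> and
  \<open>s = \<sigma>\<^sub>r\<^sup>2\<close>. The entries of the steering vector \<open>c\<close> have modulus one, so conjugation by
  \<open>diag(c)\<close> turns the block into \<open>k 1 1\<^sup>T + s I\<close> and the block of \<open>\<partial>C/\<partial>\<phi>\<close> into the matrix with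
  entries \<open>-j k (\<pi> cos \<phi> / 2) (m\<^sub>i - m\<^sub>j)\<close>, where \<open>m\<^sub>i\<close> are the centred antenna offsets.
  The inverse block is \<open>(I - g 1 1\<^sup>T) / s\<close> with \<open>g = k / (s + k N\<^sub>e)\<close>, and since
  \<open>\<Sum> m\<^sub>i = 0\<close> the block of \<open>C\<^sup>-\<^sup>1 \<partial>C/\<partial>\<phi>\<close> has entries \<open>-j a (m\<^sub>i - \<beta> m\<^sub>j)\<close> with
  \<open>a = k \<pi> cos \<phi> / (2 s)\<close> and \<open>\<beta> = s / (s + k N\<^sub>e)\<close>. The trace of its square is
  \<open>2 a\<^sup>2 \<beta> N\<^sub>e \<Sum> m\<^sub>i\<^sup>2 = 2 a\<^sup>2 \<beta> N\<^sub>e\<^sup>2 (N\<^sub>e\<^sup>2 - 1) / 3\<close> per block; summing over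
  the \<open>L\<close> blocks and inverting gives \<open>CRB(\<phi>) = A / cos\<^sup>2 \<phi>\<close>. For \<open>\<phi>\<close> uniform on \<open>(-\<pi>/2, \<pi>/2)\<close>, the
  event \<open>CRB(\<phi>) > \<epsilon>\<close> is \<open>|\<phi>| > arccos u\<close> with \<open>u = sqrt (A / \<epsilon>)\<close>, of probability
  \<open>1 - 2 arccos u / \<pi> = 2 arcsin u / \<pi>\<close>.\<close>

definition block_diag_mat :: "nat \<Rightarrow> nat \<Rightarrow> (nat \<Rightarrow> nat \<Rightarrow> 'a::zero) \<Rightarrow> 'a mat" where
  "block_diag_mat n L G =
     mat (L * n) (L * n) (\<lambda>(p, q). if p div n = q div n then G (p mod n) (q mod n) else 0)"

lemma block_diag_mat_carrier [simp]: "block_diag_mat n L G \<in> carrier_mat (L * n) (L * n)"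
  and dim_row_block_diag_mat [simp]: "dim_row (block_diag_mat n L G) = L * n"
  and dim_col_block_diag_mat [simp]: "dim_col (block_diag_mat n L G) = L * n"
  by (auto simp: block_diag_mat_def)

lemma index_block_diag_mat [simp]:
  "p < L * n \<Longrightarrow> q < L * n \<Longrightarrow>
     block_diag_mat n L G $$ (p, q) = (if p div n = q div n then G (p mod n) (q mod n) else 0)"
  by (simp add: block_diag_mat_def)

lemma sum_lessThan_mult_blocks:
  fixes f :: "nat \<Rightarrow> 'a::comm_monoid_add"
  shows "(\<Sum>r<L * n. f r) = (\<Sum>b<L. \<Sum>i<n. f (b * n + i))"
proof -
  have "(\<Sum>r<L * n. f r) = (\<Sum>b<L. sum f {0 + b * n..<n + b * n})"
    using sum.nat_group[of f n L] by (simp add: add.commute)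
  also have "\<dots> = (\<Sum>b<L. \<Sum>i<n. f (b * n + i))"
    by (simp only: sum.shift_bounds_nat_ivl add.commute lessThan_atLeast0)
  finally show ?thesis .
qed

lemma sum_lessThan_mult_block_select:
  fixes f :: "nat \<Rightarrow> 'a::comm_monoid_add"
  assumes "b < L"
  shows "(\<Sum>r<L * n. if r div n = b then f (r mod n) else 0) = (\<Sum>i<n. f i)"
proof (cases "n = 0")
  case False
  then have "(\<Sum>r<L * n. if r div n = b then f (r mod n) else 0)
      = (\<Sum>b'<L. if b' = b then (\<Sum>i<n. f i) else 0)"
    unfolding sum_lessThan_mult_blocks by (intro sum.cong) auto
  then show ?thesis
    using assms by simp
qed simp

lemma block_diag_mat_mult:
  fixes G H :: "nat \<Rightarrow> nat \<Rightarrow> 'a::comm_semiring_1"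
  assumes "0 < n"
  shows "block_diag_mat n L G * block_diag_mat n L H
       = block_diag_mat n L (\<lambda>i j. \<Sum>l<n. G i l * H l j)" (is "_ = ?R")
proof (rule eq_matI)
  fix p q assume "p < dim_row ?R" and "q < dim_col ?R"
  then have p: "p < L * n" and q: "q < L * n" by auto
  have "p div n < L" using p by (simp add: less_mult_imp_div_less)
  have "(block_diag_mat n L G * block_diag_mat n L H) $$ (p, q)
      = (\<Sum>r<L * n. block_diag_mat n L G $$ (p, r) * block_diag_mat n L H $$ (r, q))"
    using p q by (simp add: scalar_prod_def atLeast0LessThan)
  also have "\<dots> = (\<Sum>r<L * n. if r div n = p div n then
        G (p mod n) (r mod n) * (if p div n = q div n then H (r mod n) (q mod n) else 0) else 0)"
    by (rule sum.cong) (use p q in auto)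
  also have "\<dots> = (\<Sum>i<n. G (p mod n) i * (if p div n = q div n then H i (q mod n) else 0))"
    by (rule sum_lessThan_mult_block_select) fact
  also have "\<dots> = ?R $$ (p, q)"
    using p q by auto
  finally show "(block_diag_mat n L G * block_diag_mat n L H) $$ (p, q) = ?R $$ (p, q)" .
qed auto

lemma block_diag_mat_cong:
  "(\<And>i j. i < n \<Longrightarrow> j < n \<Longrightarrow> G i j = H i j) \<Longrightarrow> block_diag_mat n L G = block_diag_mat n L H"
  by (cases "n = 0") (auto simp: block_diag_mat_def intro!: eq_matI)

lemma one_mat_eq_block_diag_mat:
  "1\<^sub>m (L * n) = block_diag_mat n L (\<lambda>i j. if i = j then 1 else 0)"
  by (rule eq_matI) (auto, metis div_mult_mod_eq)

lemma mtrace_block_diag_mat: "mtrace (block_diag_mat n L G) = of_nat L * (\<Sum>i<n. G i i)"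
  unfolding mtrace_def by (simp add: sum_lessThan_mult_blocks)

definition diag_conj :: "(nat \<Rightarrow> complex) \<Rightarrow> (nat \<Rightarrow> nat \<Rightarrow> complex) \<Rightarrow> nat \<Rightarrow> nat \<Rightarrow> complex" where
  "diag_conj v M i j = v i * cnj (v j) * M i j"

lemma sum_diag_conj_mult:
  assumes unit: "\<And>l. l < n \<Longrightarrow> v l * cnj (v l) = 1"
  shows "(\<Sum>l<n. diag_conj v M i l * diag_conj v N l j)
       = diag_conj v (\<lambda>i j. \<Sum>l<n. M i l * N l j) i j"
proof -
  have summand: "diag_conj v M i l * diag_conj v N l j = v i * cnj (v j) * (M i l * N l j)"
    if "l < n" for l
  proof -
    have "diag_conj v M i l * diag_conj v N l j
        = v i * cnj (v j) * (v l * cnj (v l)) * (M i l * N l j)"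
      by (simp add: diag_conj_def ac_simps)
    then show ?thesis
      using unit[OF that] by simp
  qed
  have "(\<Sum>l<n. diag_conj v M i l * diag_conj v N l j) = (\<Sum>l<n. v i * cnj (v j) * (M i l * N l j))"
    using summand by (intro sum.cong) auto
  also have "\<dots> = diag_conj v (\<lambda>i j. \<Sum>l<n. M i l * N l j) i j"
    by (simp add: diag_conj_def sum_distrib_left)
  finally show ?thesis .
qed

lemma block_diag_mat_diag_conj_cong:
  "(\<And>i j. i < n \<Longrightarrow> j < n \<Longrightarrow> M i j = N i j) \<Longrightarrow>
     block_diag_mat n L (diag_conj v M) = block_diag_mat n L (diag_conj v N)"
  by (rule block_diag_mat_cong) (simp add: diag_conj_def)

lemma block_diag_mat_diag_conj_mult:
  assumes "0 < n" and "\<And>l. l < n \<Longrightarrow> v l * cnj (v l) = 1"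
  shows "block_diag_mat n L (diag_conj v M) * block_diag_mat n L (diag_conj v N)
       = block_diag_mat n L (diag_conj v (\<lambda>i j. \<Sum>l<n. M i l * N l j))"
  using assms by (simp add: block_diag_mat_mult sum_diag_conj_mult)

lemma mtrace_block_diag_mat_diag_conj:
  assumes "\<And>l. l < n \<Longrightarrow> v l * cnj (v l) = 1"
  shows "mtrace (block_diag_mat n L (diag_conj v M)) = of_nat L * (\<Sum>i<n. M i i)"
  using assms by (simp add: mtrace_block_diag_mat diag_conj_def)

lemma sum_rank_one_shift_inverse:
  fixes k s g :: "'a::field"
  assumes "s \<noteq> 0" and "g * (s + k * of_nat n) = k" and "i < n" and "j < n"
  shows "(\<Sum>l<n. (k + (if i = l then s else 0)) * (((if l = j then 1 else 0) - g) / s))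
       = (if i = j then 1 else 0)"
proof -
  have "(\<Sum>l<n. (k + (if i = l then s else 0)) * (((if l = j then 1 else 0) - g) / s))
      = (\<Sum>l<n. (if l = j then k / s else 0) - k * g / s
                + (if l = i then (if i = j then 1 else 0) - g else 0))"
    using assms(1) by (intro sum.cong) (auto simp: field_simps)
  also have "\<dots> = k / s - of_nat n * (k * g / s) + ((if i = j then 1 else 0) - g)"
    using assms(3,4) by (simp add: sum.distrib sum_subtractf)
  also have "\<dots> = (if i = j then 1 else 0) + (k - g * (s + k * of_nat n)) / s"
    using assms(1) by (simp add: field_simps)
  finally show ?thesis
    using assms(2) by simp
qed

lemma sum_rank_one_shift_inverse_mult_difference:
  fixes g s c :: "'a::field" and r :: "nat \<Rightarrow> 'a"
  assumes "s \<noteq> 0" and "(\<Sum>l<n. r l) = 0" and "i < n"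
  shows "(\<Sum>l<n. (((if i = l then 1 else 0) - g) / s) * (c * (r l - r j)))
       = c / s * (r i - (1 - g * of_nat n) * r j)"
proof -
  have "(\<Sum>l<n. (((if i = l then 1 else 0) - g) / s) * (c * (r l - r j)))
      = (\<Sum>l<n. (if l = i then c / s * (r i - r j) else 0) - c * g / s * r l + c * g / s * r j)"
    using assms(1) by (intro sum.cong) (auto simp: field_simps)
  also have "\<dots> = c / s * (r i - r j) - c * g / s * (\<Sum>l<n. r l) + of_nat n * (c * g / s * r j)"
    using assms(3) by (simp add: sum.distrib sum_subtractf sum_distrib_left)
  also have "\<dots> = c / s * (r i - (1 - g * of_nat n) * r j)"
    using assms(2) by (simp add: algebra_simps)
  finally show ?thesis .
qed

lemma sum_sum_centered_products:
  fixes c \<beta> :: "'a::comm_ring_1" and r :: "nat \<Rightarrow> 'a"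
  assumes "(\<Sum>l<n. r l) = 0"
  shows "(\<Sum>i<n. \<Sum>l<n. (c * (r i - \<beta> * r l)) * (c * (r l - \<beta> * r i)))
       = - 2 * c\<^sup>2 * \<beta> * of_nat n * (\<Sum>l<n. (r l)\<^sup>2)"
proof -
  define Q where "Q = (\<Sum>l<n. (r l)\<^sup>2)"
  have inner: "(\<Sum>l<n. (c * (r i - \<beta> * r l)) * (c * (r l - \<beta> * r i)))
      = - (of_nat n * c\<^sup>2 * \<beta>) * (r i)\<^sup>2 - c\<^sup>2 * \<beta> * Q" for i
  proof -
    have "(\<Sum>l<n. (c * (r i - \<beta> * r l)) * (c * (r l - \<beta> * r i)))
        = (\<Sum>l<n. c\<^sup>2 * (1 + \<beta>\<^sup>2) * r i * r l - c\<^sup>2 * \<beta> * (r i)\<^sup>2 - c\<^sup>2 * \<beta> * (r l)\<^sup>2)"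
      by (intro sum.cong) (auto simp: algebra_simps power2_eq_square)
    also have "\<dots> = c\<^sup>2 * (1 + \<beta>\<^sup>2) * r i * (\<Sum>l<n. r l) - of_nat n * (c\<^sup>2 * \<beta> * (r i)\<^sup>2)
                    - c\<^sup>2 * \<beta> * Q"
      by (simp add: Q_def sum_subtractf sum_distrib_left)
    finally show ?thesis
      using assms by (simp add: algebra_simps)
  qed
  have "(\<Sum>i<n. \<Sum>l<n. (c * (r i - \<beta> * r l)) * (c * (r l - \<beta> * r i)))
      = (\<Sum>i<n. - (of_nat n * c\<^sup>2 * \<beta>) * (r i)\<^sup>2 - c\<^sup>2 * \<beta> * Q)"
    by (simp only: inner)
  also have "\<dots> = - (of_nat n * c\<^sup>2 * \<beta>) * Q - of_nat n * (c\<^sup>2 * \<beta> * Q)"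
    by (simp add: Q_def sum_subtractf sum_distrib_left)
  also have "\<dots> = - 2 * c\<^sup>2 * \<beta> * of_nat n * Q"
    by (simp add: algebra_simps)
  finally show ?thesis
    unfolding Q_def .
qed

definition array_offset :: "nat \<Rightarrow> nat \<Rightarrow> real" where
  "array_offset n i = real n - (2 * real (i + 1) - 1)"

lemma array_offset_eq: "array_offset n i = (real n - 1) - 2 * real i"
  by (simp add: array_offset_def)

lemma sum_array_offset: "(\<Sum>i<n. array_offset n i) = 0"
proof -
  have "2 * (\<Sum>i<n. real i) = real n * (real n - 1)"
    by (induction n) (simp_all add: algebra_simps)
  then show ?thesis
    by (simp add: array_offset_eq sum_subtractf sum_distrib_left [symmetric])
qed

lemma sum_array_offset_squared: "(\<Sum>i<n. (array_offset n i)\<^sup>2) = real n * ((real n)\<^sup>2 - 1) / 3"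
proof -
  have "(\<Sum>i<n. (array_offset n i)\<^sup>2)
      = (\<Sum>i<n. (real n - 1)\<^sup>2 - 4 * (real n - 1) * real i + 4 * (real i)\<^sup>2)"
    by (intro sum.cong) (auto simp: array_offset_eq power2_eq_square algebra_simps)
  also have "\<dots> = real n * (real n - 1)\<^sup>2 - 4 * (real n - 1) * (\<Sum>i<n. real i)
                  + 4 * (\<Sum>i<n. (real i)\<^sup>2)"
    by (simp add: sum.distrib sum_subtractf sum_distrib_left)
  also have "(\<Sum>i<n. real i) = real n * (real n - 1) / 2"
    by (induction n) (simp_all add: field_simps)
  also have "(\<Sum>i<n. (real i)\<^sup>2) = real n * (real n - 1) * (2 * real n - 1) / 6"
    by (induction n) (simp_all add: field_simps power2_eq_square)
  finally show ?thesis
    by (simp add: field_simps power2_eq_square)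
qed

definition steer_phase :: "nat \<Rightarrow> real \<Rightarrow> nat \<Rightarrow> complex" where
  "steer_phase n t i = exp (- \<i> * complex_of_real (pi * sin t * array_offset n i / 2))"

lemma dim_vec_steer [simp]: "dim_vec (steer n t) = n"
  by (simp add: steer_def)

lemma steer_nth: "i < n \<Longrightarrow> steer n t $ i = steer_phase n t i"
  by (simp add: steer_def steer_phase_def array_offset_def)

lemma steer_phase_mult_cnj:
  "steer_phase n t i * cnj (steer_phase n t j)
     = exp (- \<i> * complex_of_real (pi * sin t * (array_offset n i - array_offset n j) / 2))"
  by (simp add: steer_phase_def exp_cnj exp_add [symmetric] algebra_simps diff_divide_distrib)

lemma steer_phase_mult_cnj_self: "steer_phase n t i * cnj (steer_phase n t i) = 1"
  by (simp add: steer_phase_mult_cnj)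

lemma has_vector_derivative_exp_sin:
  fixes a b :: complex and w :: real
  shows "((\<lambda>t. a * exp (- \<i> * complex_of_real (pi * sin t * w / 2)) + b) has_vector_derivative
          - \<i> * a * complex_of_real (pi * cos phi * w / 2)
            * exp (- \<i> * complex_of_real (pi * sin phi * w / 2))) (at phi)"
proof -
  define h where "h z = a * exp (- \<i> * (of_real pi * sin z * of_real w / 2)) + b" for z :: complex
  have "(h has_field_derivative a * exp (- \<i> * (of_real pi * sin (of_real phi) * of_real w / 2))
          * (- \<i> * (of_real pi * cos (of_real phi) * of_real w / 2))) (at (of_real phi))"
    unfolding h_def by (rule derivative_eq_intros refl | simp)+
  then have "((\<lambda>t. h (of_real t)) has_vector_derivative a * exp (- \<i> * (of_real pi * sin (of_real phi) * of_real w / 2))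
          * (- \<i> * (of_real pi * cos (of_real phi) * of_real w / 2))) (at phi)"
    by (rule has_vector_derivative_real_field)
  then show ?thesis
    by (simp add: h_def sin_of_real cos_of_real algebra_simps)
qed

definition rank_one_gain :: "nat \<Rightarrow> complex \<Rightarrow> real \<Rightarrow> real" where
  "rank_one_gain L c4 d = (cmod c4)\<^sup>2 * real L * d"

lemma covC_eq_block_diag_mat:
  assumes "0 < Ne"
  shows "covC Ne L sr c4 d t = block_diag_mat Ne L (diag_conj (steer_phase Ne t)
           (\<lambda>i j. of_real (rank_one_gain L c4 d) + (if i = j then of_real (sr\<^sup>2) else 0)))"
proof -
  define v where "v = steer_phase Ne t"
  have "covC Ne L sr c4 d t = block_diag_mat Ne L (\<lambda>i j.
      of_real (rank_one_gain L c4 d) * (v i * cnj (v j)) + (if i = j then of_real (sr\<^sup>2) else 0))"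
    (is "_ = ?R")
  proof (rule eq_matI)
    fix p q assume "p < dim_row ?R" and "q < dim_col ?R"
    then have p: "p < L * Ne" and q: "q < L * Ne" by auto
    have pq: "p = q \<longleftrightarrow> p div Ne = q div Ne \<and> p mod Ne = q mod Ne"
      by (metis div_mult_mod_eq)
    show "covC Ne L sr c4 d t $$ (p, q) = ?R $$ (p, q)"
      using p q assms unfolding covC_def kron_id_def outer_H_def Let_def rank_one_gain_def
      by (auto simp: mult.commute [of Ne L] steer_nth v_def pq)
  qed (auto simp: covC_def kron_id_def outer_H_def mult.commute [of Ne L])
  also have "\<dots> = block_diag_mat Ne L (diag_conj v
      (\<lambda>i j. of_real (rank_one_gain L c4 d) + (if i = j then of_real (sr\<^sup>2) else 0)))"
    by (rule block_diag_mat_cong)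
      (simp add: diag_conj_def distrib_left v_def steer_phase_mult_cnj_self ac_simps)
  finally show ?thesis
    unfolding v_def .
qed

lemma dcovC_eq_block_diag_mat:
  assumes "0 < Ne"
  shows "dcovC Ne L sr c4 d phi = block_diag_mat Ne L (diag_conj (steer_phase Ne phi)
           (\<lambda>i j. - \<i> * of_real (rank_one_gain L c4 d * pi * cos phi / 2)
                  * (of_real (array_offset Ne i) - of_real (array_offset Ne j))))" (is "_ = ?R")
proof (rule eq_matI)
  define k where "k = rank_one_gain L c4 d"
  fix p q assume "p < dim_row ?R" and "q < dim_col ?R"
  then have p: "p < L * Ne" and q: "q < L * Ne" by auto
  define w where "w = array_offset Ne (p mod Ne) - array_offset Ne (q mod Ne)"
  have entry: "(\<lambda>t. covC Ne L sr c4 d t $$ (p, q)) = (\<lambda>t. if p div Ne = q div Ne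
      then of_real k * exp (- \<i> * complex_of_real (pi * sin t * w / 2))
           + (if p mod Ne = q mod Ne then of_real (sr\<^sup>2) else 0)
      else 0)"
    using p q by (intro ext) (auto simp: covC_eq_block_diag_mat [OF assms] diag_conj_def
        steer_phase_mult_cnj steer_phase_mult_cnj_self k_def w_def algebra_simps)
  have "dcovC Ne L sr c4 d phi $$ (p, q) = vector_derivative (\<lambda>t. covC Ne L sr c4 d t $$ (p, q)) (at phi)"
    using p q by (simp add: dcovC_def mult.commute [of Ne L])
  also have "\<dots> = (if p div Ne = q div Ne
      then - \<i> * of_real k * complex_of_real (pi * cos phi * w / 2)
           * exp (- \<i> * complex_of_real (pi * sin phi * w / 2))
      else 0)"
    unfolding entry
    by (cases "p div Ne = q div Ne")
      (simp_all only: simp_thms if_True if_False vector_derivative_const_at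
        vector_derivative_at [OF has_vector_derivative_exp_sin])
  also have "\<dots> = ?R $$ (p, q)"
    using p q by (simp add: diag_conj_def steer_phase_mult_cnj k_def w_def field_simps)
  finally show "dcovC Ne L sr c4 d phi $$ (p, q) = ?R $$ (p, q)" .
qed (simp_all add: dcovC_def)

lemma the_mat_inverse_eqI:
  fixes A B :: "'a::field mat"
  assumes A: "A \<in> carrier_mat n n" and B: "B \<in> carrier_mat n n" and AB: "A * B = 1\<^sub>m n"
  shows "the (mat_inverse A) = B"
proof (cases "mat_inverse A")
  case None
  have "B * A = 1\<^sub>m n"
    by (rule mat_mult_left_right_inverse [OF A B AB])
  then have "A \<in> Units (ring_mat TYPE('a) n undefined)"
    using A B AB unfolding Units_def ring_mat_def by auto
  with mat_inverse(1) [OF A None, of undefined] show ?thesis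
    by blast
next
  case (Some B')
  then have B': "B' * A = 1\<^sub>m n" "B' \<in> carrier_mat n n"
    using mat_inverse(2) [OF A] by auto
  have "B' = B' * (A * B)"
    using B' AB by simp
  also have "\<dots> = (B' * A) * B"
    by (rule assoc_mult_mat [symmetric]) (use A B B' in auto)
  also have "\<dots> = B"
    using B' B by simp
  finally show ?thesis
    using Some by simp
qed

lemma the_mat_inverse_covC:
  fixes Ne L :: nat and sr d phi :: real and c4 :: complex
  defines k_def: "k \<equiv> rank_one_gain L c4 d" and s_def: "s \<equiv> sr\<^sup>2"
  assumes Ne: "0 < Ne" and sr: "0 < sr" and d: "0 \<le> d"
  shows "the (mat_inverse (covC Ne L sr c4 d phi)) = block_diag_mat Ne L (diag_conj (steer_phase Ne phi)
           (\<lambda>i j. ((if i = j then 1 else 0) - of_real (k / (s + k * real Ne))) / of_real s))"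
    (is "_ = ?Ci")
proof (rule the_mat_inverse_eqI)
  have unit: "\<And>l. steer_phase Ne phi l * cnj (steer_phase Ne phi l) = 1"
    by (rule steer_phase_mult_cnj_self)
  have "0 < s" and "0 < s + k * real Ne"
    using sr d by (simp_all add: s_def k_def rank_one_gain_def add_pos_nonneg)
  have g: "of_real (k / (s + k * real Ne)) * (of_real s + of_real k * of_nat Ne) = complex_of_real k"
  proof -
    have "of_real (k / (s + k * real Ne)) * (of_real s + of_real k * of_nat Ne)
        = complex_of_real (k / (s + k * real Ne) * (s + k * real Ne))"
      by (simp only: of_real_mult of_real_add of_real_of_nat_eq)
    also have "\<dots> = of_real k"
      using \<open>0 < s + k * real Ne\<close> by simp
    finally show ?thesis .
  qed
  have "covC Ne L sr c4 d phi * ?Ci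
      = block_diag_mat Ne L (diag_conj (steer_phase Ne phi) (\<lambda>i j. if i = j then 1 else 0))"
    unfolding covC_eq_block_diag_mat [OF Ne] block_diag_mat_diag_conj_mult [OF Ne unit]
      k_def [symmetric] s_def [symmetric]
    using \<open>0 < s\<close> g by (intro block_diag_mat_diag_conj_cong sum_rank_one_shift_inverse) auto
  also have "\<dots> = 1\<^sub>m (L * Ne)"
    by (subst one_mat_eq_block_diag_mat, rule block_diag_mat_cong) (simp add: diag_conj_def unit)
  finally show "covC Ne L sr c4 d phi * ?Ci = 1\<^sub>m (L * Ne)" .
qed (simp_all add: covC_eq_block_diag_mat [OF Ne])

lemma inverse_covC_mult_dcovC:
  fixes Ne L :: nat and sr d phi :: real and c4 :: complex
  defines k_def: "k \<equiv> rank_one_gain L c4 d" and s_def: "s \<equiv> sr\<^sup>2"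
    and c_def: "c \<equiv> - \<i> * of_real (rank_one_gain L c4 d * pi * cos phi / (2 * sr\<^sup>2))"
    and \<beta>_def: "\<beta> \<equiv> sr\<^sup>2 / (sr\<^sup>2 + rank_one_gain L c4 d * real Ne)"
  assumes Ne: "0 < Ne" and sr: "0 < sr" and d: "0 \<le> d"
  shows "the (mat_inverse (covC Ne L sr c4 d phi)) * dcovC Ne L sr c4 d phi
       = block_diag_mat Ne L (diag_conj (steer_phase Ne phi) (\<lambda>i j.
           c * (of_real (array_offset Ne i) - of_real \<beta> * of_real (array_offset Ne j))))"
proof -
  have unit: "\<And>l. steer_phase Ne phi l * cnj (steer_phase Ne phi l) = 1"
    by (rule steer_phase_mult_cnj_self)
  have "0 < s" and "0 < s + k * real Ne"
    using sr d by (simp_all add: s_def k_def rank_one_gain_def add_pos_nonneg)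
  have r: "(\<Sum>l<Ne. complex_of_real (array_offset Ne l)) = 0"
    by (simp add: sum_array_offset flip: of_real_sum)
  have c: "- \<i> * of_real (k * pi * cos phi / 2) / of_real s = c"
    by (simp add: c_def k_def s_def)
  have "1 - k / (s + k * real Ne) * real Ne = \<beta>"
    using \<open>0 < s + k * real Ne\<close> by (simp add: \<beta>_def k_def s_def field_simps)
  then have \<beta>: "1 - of_real (k / (s + k * real Ne)) * of_nat Ne = complex_of_real \<beta>"
    by (metis of_real_1 of_real_diff of_real_mult of_real_of_nat_eq)
  have entry: "(\<Sum>l<Ne. ((if i = l then 1 else 0) - of_real (k / (s + k * real Ne))) / of_real s
        * (- \<i> * of_real (k * pi * cos phi / 2)
           * (of_real (array_offset Ne l) - of_real (array_offset Ne j))))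
      = c * (of_real (array_offset Ne i) - of_real \<beta> * of_real (array_offset Ne j))"
    if "i < Ne" for i j
  proof -
    have "(\<Sum>l<Ne. ((if i = l then 1 else 0) - of_real (k / (s + k * real Ne))) / of_real s
        * (- \<i> * of_real (k * pi * cos phi / 2)
           * (of_real (array_offset Ne l) - of_real (array_offset Ne j))))
      = - \<i> * of_real (k * pi * cos phi / 2) / of_real s * (of_real (array_offset Ne i)
          - (1 - of_real (k / (s + k * real Ne)) * of_nat Ne) * of_real (array_offset Ne j))"
      using \<open>0 < s\<close> that by (intro sum_rank_one_shift_inverse_mult_difference r) simp_all
    then show ?thesis
      unfolding c \<beta> .
  qed
  show ?thesis
    unfolding the_mat_inverse_covC [OF Ne sr d] dcovC_eq_block_diag_mat [OF Ne]
      block_diag_mat_diag_conj_mult [OF Ne unit] k_def [symmetric] s_def [symmetric]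
    by (intro block_diag_mat_diag_conj_cong entry)
qed

lemma fisher_eq:
  assumes "0 < Ne" and "0 < sr" and "0 \<le> d"
  shows "fisher Ne L sr c4 d phi = complex_of_real
    ((cmod c4)^4 * real L ^ 3 * d\<^sup>2 * pi\<^sup>2 * (cos phi)\<^sup>2 * (real Ne)\<^sup>2 * ((real Ne)\<^sup>2 - 1)
      / (6 * sr\<^sup>2 * (sr\<^sup>2 + (cmod c4)\<^sup>2 * real L * d * real Ne)))"
proof -
  define k where "k = rank_one_gain L c4 d"
  define s where "s = sr\<^sup>2"
  define a where "a = k * pi * cos phi / (2 * s)"
  define S where "S = s + k * real Ne"
  define \<beta> where "\<beta> = s / S"
  define X where "X = the (mat_inverse (covC Ne L sr c4 d phi)) * dcovC Ne L sr c4 d phi"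
  have unit: "\<And>l. steer_phase Ne phi l * cnj (steer_phase Ne phi l) = 1"
    by (rule steer_phase_mult_cnj_self)
  have r: "(\<Sum>l<Ne. complex_of_real (array_offset Ne l)) = 0"
    by (simp add: sum_array_offset flip: of_real_sum)
  have X: "X = block_diag_mat Ne L (diag_conj (steer_phase Ne phi) (\<lambda>i j.
      (- \<i> * of_real a) * (of_real (array_offset Ne i) - of_real \<beta> * of_real (array_offset Ne j))))"
    unfolding X_def a_def \<beta>_def S_def k_def s_def by (rule inverse_covC_mult_dcovC [OF assms])
  have "fisher Ne L sr c4 d phi = mtrace (X * X)"
    unfolding fisher_def Let_def X_def
    by (rule arg_cong [where f = mtrace], rule assoc_mult_mat [of _ "L * Ne" "L * Ne" _ "L * Ne"])
      (auto simp: the_mat_inverse_covC [OF assms] dcovC_eq_block_diag_mat [OF assms(1)])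
  also have "\<dots> = of_nat L * (- 2 * (- \<i> * of_real a)\<^sup>2 * of_real \<beta> * of_nat Ne
                                * (\<Sum>l<Ne. (complex_of_real (array_offset Ne l))\<^sup>2))"
    unfolding X block_diag_mat_diag_conj_mult [OF assms(1) unit] mtrace_block_diag_mat_diag_conj [OF unit]
    by (simp only: sum_sum_centered_products [OF r])
  also have "\<dots> = of_real (2 * real L * a\<^sup>2 * \<beta> * real Ne * (real Ne * ((real Ne)\<^sup>2 - 1) / 3))"
    by (simp add: power_mult_distrib sum_array_offset_squared flip: of_real_power of_real_sum)
  also have "2 * real L * a\<^sup>2 * \<beta> * real Ne * (real Ne * ((real Ne)\<^sup>2 - 1) / 3)
      = (cmod c4)^4 * real L ^ 3 * d\<^sup>2 * pi\<^sup>2 * (cos phi)\<^sup>2 * (real Ne)\<^sup>2 * ((real Ne)\<^sup>2 - 1)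
          / (6 * sr\<^sup>2 * (sr\<^sup>2 + (cmod c4)\<^sup>2 * real L * d * real Ne))"
  proof -
    have "0 < s" and "0 < S"
      using assms by (simp_all add: S_def s_def k_def rank_one_gain_def add_pos_nonneg)
    then have "2 * real L * a\<^sup>2 * \<beta> * real Ne * (real Ne * ((real Ne)\<^sup>2 - 1) / 3)
        = (real L * k\<^sup>2) * (pi\<^sup>2 * (cos phi)\<^sup>2 * (real Ne)\<^sup>2 * ((real Ne)\<^sup>2 - 1)) / (6 * s * S)"
      by (simp add: a_def \<beta>_def field_simps power2_eq_square)
    also have "real L * k\<^sup>2 = (cmod c4)^4 * real L ^ 3 * d\<^sup>2"
      by (simp add: k_def rank_one_gain_def power2_eq_square power3_eq_cube power4_eq_xxxx)
    also have "6 * s * S = 6 * sr\<^sup>2 * (sr\<^sup>2 + (cmod c4)\<^sup>2 * real L * d * real Ne)"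
      by (simp add: S_def s_def k_def rank_one_gain_def algebra_simps)
    finally show ?thesis
      by (simp only: mult.assoc)
  qed
  finally show ?thesis .
qed

text \<open>No restriction on \<open>\<phi>\<close> is needed: at \<open>cos \<phi> = 0\<close> both sides are \<open>0\<close>, as \<open>x / 0 = 0\<close>.\<close>

lemma CRB_eq:
  assumes "0 < Ne" and "0 < sr" and "0 \<le> d"
  shows "CRB Ne L sr c4 d phi = complex_of_real
    (6 * sr\<^sup>2 * (sr\<^sup>2 + (cmod c4)\<^sup>2 * real L * d * real Ne)
      / ((cmod c4)^4 * real L ^ 3 * d\<^sup>2 * pi\<^sup>2 * (cos phi)\<^sup>2 * (real Ne)\<^sup>2 * ((real Ne)\<^sup>2 - 1)))"
proof -
  have "1 / complex_of_real (a / b) = complex_of_real (b / a)" for a b :: real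
    by simp
  then show ?thesis
    unfolding CRB_def fisher_eq [OF assms] .
qed

lemma measure_cos_less:
  assumes "0 < u" and "u \<le> 1"
  shows "measure lborel {phi \<in> {-pi/2<..<pi/2}. cos phi < u} = pi - 2 * arccos u"
proof -
  define a where "a = arccos u"
  have "0 \<le> a" and "cos a = u"
    using assms by (simp_all add: a_def arccos_lbound)
  moreover have "a < pi / 2"
    using arccos_less_arccos [of 0 u] assms by (simp add: a_def)
  ultimately have key: "cos phi < u \<longleftrightarrow> phi < -a \<or> a < phi" if "phi \<in> {-pi/2<..<pi/2}" for phi
  proof -
    have "cos phi < u \<longleftrightarrow> cos \<bar>phi\<bar> < cos a"
      using \<open>cos a = u\<close> by simp
    also have "\<dots> \<longleftrightarrow> a < \<bar>phi\<bar>"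
      using that \<open>0 \<le> a\<close> \<open>a < pi / 2\<close> by (intro cos_mono_less_eq) auto
    also have "\<dots> \<longleftrightarrow> phi < -a \<or> a < phi"
      by arith
    finally show ?thesis .
  qed
  have "{phi \<in> {-pi/2<..<pi/2}. cos phi < u} = {-pi/2<..<-a} \<union> {a<..<pi/2}"
  proof (rule Set.set_eqI)
    show "phi \<in> {phi \<in> {-pi/2<..<pi/2}. cos phi < u} \<longleftrightarrow> phi \<in> {-pi/2<..<-a} \<union> {a<..<pi/2}" for phi
      using key [of phi] \<open>0 \<le> a\<close> by auto
  qed
  moreover have "measure lborel ({-pi/2<..<-a} \<union> {a<..<pi/2}) = (pi/2 - a) + (pi/2 - a)"
    using \<open>0 \<le> a\<close> \<open>a < pi / 2\<close> by (subst measure_Union) auto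
  ultimately show ?thesis
    by (simp add: a_def)
qed

lemma less_divide_power2_iff:
  fixes A \<epsilon> x :: real
  assumes "0 < \<epsilon>" and "0 < x"
  shows "\<epsilon> < A / x\<^sup>2 \<longleftrightarrow> x < sqrt (A / \<epsilon>)"
proof -
  have "\<epsilon> < A / x\<^sup>2 \<longleftrightarrow> x\<^sup>2 < A / \<epsilon>"
    using assms by (simp add: field_simps)
  also have "\<dots> \<longleftrightarrow> sqrt (x\<^sup>2) < sqrt (A / \<epsilon>)"
    by (rule real_sqrt_less_iff [symmetric])
  finally show ?thesis
    using assms(2) by simp
qed

lemma measure_uniform_inverse_cos_sq_greater:
  fixes A \<epsilon> :: real
  assumes "0 < A" and "0 < \<epsilon>"
  shows "measure (uniform_measure lborel {-pi/2<..<pi/2})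
           {phi \<in> {-pi/2<..<pi/2}. \<epsilon> < A / (cos phi)\<^sup>2}
       = (if sqrt (A / \<epsilon>) < 1 then 2 / pi * arcsin (sqrt (A / \<epsilon>)) else 1)"
proof -
  define u where "u = sqrt (A / \<epsilon>)"
  have "0 < u"
    using assms by (simp add: u_def)
  have "\<epsilon> < A / (cos phi)\<^sup>2 \<longleftrightarrow> cos phi < u" if "phi \<in> {-pi/2<..<pi/2}" for phi
    using that assms by (simp add: u_def less_divide_power2_iff cos_gt_zero_pi)
  then have "{phi \<in> {-pi/2<..<pi/2}. \<epsilon> < A / (cos phi)\<^sup>2} = {phi \<in> {-pi/2<..<pi/2}. cos phi < u}"
    by auto
  moreover have "measure (uniform_measure lborel {-pi/2<..<pi/2}) {phi \<in> {-pi/2<..<pi/2}. cos phi < u}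
      = measure lborel ({-pi/2<..<pi/2} \<inter> {phi \<in> {-pi/2<..<pi/2}. cos phi < u}) / pi"
    by (subst measure_uniform_measure) auto
  ultimately have "measure (uniform_measure lborel {-pi/2<..<pi/2})
           {phi \<in> {-pi/2<..<pi/2}. \<epsilon> < A / (cos phi)\<^sup>2}
      = measure lborel {phi \<in> {-pi/2<..<pi/2}. cos phi < u} / pi"
    by (simp only: Int_absorb1 [OF Collect_subset])
  also have "\<dots> = (if u < 1 then 2 / pi * arcsin u else 1)"
  proof (cases "u \<le> 1")
    case True
    have "measure lborel {phi \<in> {-pi/2<..<pi/2}. cos phi < u} / pi = 2 / pi * arcsin u"
      unfolding measure_cos_less [OF \<open>0 < u\<close> True]
      using \<open>0 < u\<close> True by (simp add: arcsin_arccos_eq field_simps)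
    then show ?thesis
      using True by auto
  next
    case False
    then have "{phi \<in> {-pi/2<..<pi/2}. cos phi < u} = {-pi/2<..<pi/2}"
      by (auto intro: le_less_trans [OF cos_le_one])
    then show ?thesis
      using False by simp
  qed
  finally show ?thesis
    unfolding u_def .
qed

lemma sqrt_mult_powr_neg_half_mult_powr_half:
  fixes a x b :: real
  assumes "0 \<le> a" and "0 < x" and "0 \<le> b"
  shows "sqrt a * x powr (-1/2) * b powr (1/2) = sqrt (a * b / x)"
  using assms by (simp add: powr_minus_divide powr_half_sqrt real_sqrt_mult real_sqrt_divide)

theorem lemma6:
  fixes Ne L :: nat and sr d :: real and c4 :: complex
  assumes "Ne \<ge> 2" and "L \<ge> 1" and "sr > 0" and "c4 \<noteq> 0" and "d > 0"
  shows "(\<forall>phi \<in> {-pi/2<..<pi/2}.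
           CRB Ne L sr c4 d phi =
             complex_of_real ((6 * sr\<^sup>2 * (sr\<^sup>2 + (cmod c4)\<^sup>2 * real L * d * real Ne)) /
               ((cmod c4)^4 * real L ^ 3 * d\<^sup>2 * pi\<^sup>2 * (cos phi)\<^sup>2 * (real Ne)\<^sup>2 * ((real Ne)\<^sup>2 - 1)))) \<and>
         (\<forall>\<epsilon>>0. (let u = sqrt 6 * sr
                  * (\<epsilon> * (cmod c4)^4 * real L ^ 3 * d\<^sup>2 * pi\<^sup>2 * (real Ne)\<^sup>2 * ((real Ne)\<^sup>2 - 1)) powr (-1/2)
                  * (sr\<^sup>2 + (cmod c4)\<^sup>2 * real L * d * real Ne) powr (1/2)
              in measure (uniform_measure lborel {-pi/2<..<pi/2})
                   {phi \<in> {-pi/2<..<pi/2}. Re (CRB Ne L sr c4 d phi) > \<epsilon>}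
                 = (if u < 1 then 2 / pi * arcsin u else 1)))"
proof -
  define B where "B = sr\<^sup>2 + (cmod c4)\<^sup>2 * real L * d * real Ne"
  define P where "P = (cmod c4)^4 * real L ^ 3 * d\<^sup>2 * pi\<^sup>2 * (real Ne)\<^sup>2 * ((real Ne)\<^sup>2 - 1)"
  have "0 < B"
    using assms by (simp add: B_def add_pos_nonneg)
  have "1 < (real Ne)\<^sup>2"
    using power_strict_mono [of 1 "real Ne" 2] assms(1) by simp
  then have "0 < P"
    using assms by (simp add: P_def)
  have CRB: "CRB Ne L sr c4 d phi = of_real (6 * sr\<^sup>2 * B / P / (cos phi)\<^sup>2)" for phi
    using assms by (simp add: CRB_eq B_def P_def divide_divide_eq_left ac_simps)
  have u: "sqrt 6 * sr * (\<epsilon> * (cmod c4)^4 * real L ^ 3 * d\<^sup>2 * pi\<^sup>2 * (real Ne)\<^sup>2 * ((real Ne)\<^sup>2 - 1)) powr (-1/2)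
      * B powr (1/2) = sqrt (6 * sr\<^sup>2 * B / P / \<epsilon>)" if "0 < \<epsilon>" for \<epsilon>
    using sqrt_mult_powr_neg_half_mult_powr_half [of "6 * sr\<^sup>2" "\<epsilon> * P" B] that assms \<open>0 < B\<close> \<open>0 < P\<close>
    by (simp add: P_def real_sqrt_mult divide_divide_eq_left ac_simps)
  have measure: "measure (uniform_measure lborel {-pi/2<..<pi/2})
        {phi \<in> {-pi/2<..<pi/2}. \<epsilon> < Re (CRB Ne L sr c4 d phi)}
      = (if sqrt (6 * sr\<^sup>2 * B / P / \<epsilon>) < 1 then 2 / pi * arcsin (sqrt (6 * sr\<^sup>2 * B / P / \<epsilon>)) else 1)"
    if "0 < \<epsilon>" for \<epsilon>
    unfolding CRB Re_complex_of_real
    using assms \<open>0 < B\<close> \<open>0 < P\<close> that by (intro measure_uniform_inverse_cos_sq_greater) simp_all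
  show ?thesis
    unfolding Let_def B_def [symmetric]
    by (intro conjI ballI allI impI)
      (use CRB_eq [of Ne sr d L c4, folded B_def] assms in simp, simp only: u measure)
qed

end
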